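(* Let $a,r$ be positive integers with $r\ge 2$, let $a_n=ar^{n-1}+1$ for $n\ge 1$, and set $d=\gcd(a+1,r-1)$. (1) Suppose $d$ is odd. If $a+1$ does not divide $r-1$, then the sequence $(\Gamma(a_n,a_{n+1}))_{n\ge 1}$ is constant. If $a+1$ divides $r-1$, then $\Gamma(a_1,a_2)=1$ and $\Gamma(a_n,a_{n+1})=2$ for all $n\ge 2$. (2) If $d$ is even, then the sequence $(\Gamma(a_n,a_{n+1}))_{n\ge 2}$ alternates between $1$ and $2$.
   Context: For relatively prime positive integers $p,q$, exactly one of the equations $px+qy=\frac{(p-1)(q-1)}{2}$ (Equation 1) and $px+qy+1=\frac{(p-1)(q-1)}{2}$ (Equation 2) has a solution in nonnegative integers $(x,y)$. For positive integers $a,b$ with $d=\gcd(a,b)$, $\Gamma(a,b)=1$ if Equation 1 with $(p,q)=(a/d,b/d)$ has a nonnegative integer solution, and $\Gamma(a,b)=2$ otherwise. *)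

theory Defs
  imports Main
begin

text \<open>Equation 1 for coprime p q: p x + q y = (p-1)(q-1)/2 has a solution in
nonnegative integers. Note (p-1)(q-1) is even for coprime p, q (not both even),
except the degenerate cases are handled by the exact-halving check below.\<close>

definition eq1_solvable :: "nat \<Rightarrow> nat \<Rightarrow> bool" where
  "eq1_solvable p q \<longleftrightarrow>
     (\<exists>x y :: nat. 2 * (p * x + q * y) = (p - 1) * (q - 1))"

definition Gamma :: "nat \<Rightarrow> nat \<Rightarrow> nat" where
  "Gamma a b = (let d = gcd a b in if eq1_solvable (a div d) (b div d) then 1 else 2)"

definition seq_a :: "nat \<Rightarrow> nat \<Rightarrow> nat \<Rightarrow> nat" where
  "seq_a a r n = a * r ^ (n - 1) + 1"

end

theory Submission
  imports Defs "HOL-Number_Theory.Cong"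
begin

text \<open>Write \<open>a + 1 = d e\<close> and \<open>r = 1 + d m\<close>. Then \<open>a\<^sub>n = d P\<^sub>n\<close> with
\<open>P\<^sub>1 = e\<close> and \<open>P\<^sub>n\<^sub>+\<^sub>1 = r P\<^sub>n - m\<close>; consecutive \<open>P\<^sub>n\<close> are coprime and all
\<open>P\<^sub>n\<close> are congruent to \<open>e\<close> modulo \<open>m\<close>. Fix the inverse \<open>k \<in> [1, m]\<close> of \<open>e\<close>
modulo \<open>m\<close> and put \<open>V\<^sub>n = (k P\<^sub>n - 1) / m\<close>. For coprime \<open>p\<close> and
\<open>q = r p - m\<close>, a solution of Equation 1 forces \<open>2 x + 2 r y + 1 + r - q\<close> to be an
inverse of \<open>p\<close> modulo \<open>m\<close> lying in \<open>[1, m]\<close>, i.e. to equal \<open>k\<close>; so the only candidate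
is \<open>2 y + 1 = V\<close>, \<open>2 x = q + k - 1 - r V\<close>, and solvability is a parity condition
on \<open>V\<^sub>n\<close> and \<open>P\<^sub>n\<^sub>+\<^sub>1\<close>. Reducing the recurrences for \<open>P\<^sub>n\<close> and \<open>V\<^sub>n\<close> modulo 2,
the condition is independent of \<open>n\<close> when \<open>d\<close> is odd and flips at every step when \<open>d\<close>
is even.\<close>

lemma eq1_solvable_one: "eq1_solvable 1 q"
  unfolding eq1_solvable_def by auto

lemma Gamma_mult_coprime:
  assumes "coprime p q" and "d > 0"
  shows "Gamma (d * p) (d * q) = (if eq1_solvable p q then 1 else 2)"
proof -
  have "gcd (d * p) (d * q) = d"
    using assms(1) by (simp add: gcd_mult_left)
  then show ?thesis
    using assms(2) by (simp add: Gamma_def Let_def)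
qed

lemma eq1_solvable_int_iff:
  assumes "p \<ge> 1" and "q \<ge> 1"
  shows "eq1_solvable p q \<longleftrightarrow>
    (\<exists>x y :: int. x \<ge> 0 \<and> y \<ge> 0 \<and> 2 * (int p * x + int q * y) = (int p - 1) * (int q - 1))"
proof
  assume "eq1_solvable p q"
  then obtain x y where "2 * (p * x + q * y) = (p - 1) * (q - 1)"
    unfolding eq1_solvable_def by blast
  then have "int (2 * (p * x + q * y)) = int ((p - 1) * (q - 1))"
    by (rule arg_cong)
  then have "2 * (int p * int x + int q * int y) = (int p - 1) * (int q - 1)"
    using assms by (simp add: of_nat_diff)
  then show "\<exists>x y :: int. x \<ge> 0 \<and> y \<ge> 0 \<and> 2 * (int p * x + int q * y) = (int p - 1) * (int q - 1)"
    by (intro exI[of _ "int x"] exI[of _ "int y"]) simp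
next
  assume "\<exists>x y :: int. x \<ge> 0 \<and> y \<ge> 0 \<and> 2 * (int p * x + int q * y) = (int p - 1) * (int q - 1)"
  then obtain x y :: int
    where "x \<ge> 0" "y \<ge> 0" "2 * (int p * x + int q * y) = (int p - 1) * (int q - 1)"
    by blast
  then have "int (2 * (p * nat x + q * nat y)) = int ((p - 1) * (q - 1))"
    using assms by (simp add: of_nat_diff)
  then show "eq1_solvable p q"
    unfolding eq1_solvable_def by (meson of_nat_eq_iff)
qed

lemma eq1_int_solution_iff:
  fixes p q m r k v x y :: int
  assumes p2: "p \<ge> 2" and mr: "m < r" and qpm: "q + m = r * p" and pkv: "p * k = 1 + m * v"
    and k: "0 < k" "k \<le> m" and xy: "x \<ge> 0" "y \<ge> 0"
  shows "2 * (p * x + q * y) = (p - 1) * (q - 1) \<longleftrightarrow> 2 * y + 1 = v \<and> 2 * x + r * v + 1 = q + k"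
proof
  assume "2 * y + 1 = v \<and> 2 * x + r * v + 1 = q + k"
  then show "2 * (p * x + q * y) = (p - 1) * (q - 1)"
    using qpm pkv by (elim conjE) algebra
next
  assume xy_eq: "2 * (p * x + q * y) = (p - 1) * (q - 1)"
  define K where "K = 2 * (x + r * y) + 1 + r - q"
  have Kp: "K * p = m * (2 * y + 1) + 1"
    using qpm xy_eq unfolding K_def by algebra
  have "r * p \<ge> r * 2"
    using p2 mr k by (intro mult_left_mono) auto
  then have q0: "q > 0"
    using qpm mr k by linarith
  have "2 * y + 1 < p"
  proof (rule ccontr)
    assume "\<not> 2 * y + 1 < p"
    then have "q * (p - 1) \<le> q * (2 * y)"
      using q0 by (intro mult_left_mono) auto
    moreover have "p * x \<ge> 0"
      using p2 xy(1) by simp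
    ultimately have "q * (p - 1) \<le> (p - 1) * (q - 1)"
      using xy_eq by (simp add: algebra_simps)
    then show False
      using p2 by (simp add: algebra_simps)
  qed
  have "K * p < (m + 1) * p"
  proof -
    have "K * p \<le> m * (p - 1) + 1"
      unfolding Kp using \<open>2 * y + 1 < p\<close> k by (intro add_right_mono mult_left_mono) auto
    also have "\<dots> < (m + 1) * p"
      using p2 k by (simp add: algebra_simps)
    finally show ?thesis .
  qed
  then have K_le: "K \<le> m"
    using p2 by (simp add: mult_less_cancel_right)
  have "0 < K * p"
    using Kp k xy(2) by simp
  then have K_pos: "0 < K"
    using p2 by (auto simp: zero_less_mult_iff)
  have "coprime m p"
  proof (rule coprimeI)
    fix g assume "g dvd m" "g dvd p"
    then have "g dvd p * k - m * v"
      by simp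
    then show "is_unit g"
      using pkv by simp
  qed
  moreover have "(K - k) * p = m * (2 * y + 1 - v)"
    using Kp pkv by (simp add: algebra_simps)
  ultimately have "m dvd K - k"
    by (metis coprime_dvd_mult_left_iff dvd_triv_left)
  then have Kk: "K = k"
    using K_pos K_le k dvd_imp_le_int[of "K - k" m] by fastforce
  then have "m * (2 * y + 1) = m * v"
    using Kp pkv by (simp add: algebra_simps)
  then have "2 * y + 1 = v"
    using k by simp
  moreover have "2 * x + r * v + 1 = q + k"
    using Kk unfolding K_def \<open>2 * y + 1 = v\<close>[symmetric] by (simp add: algebra_simps)
  ultimately show "2 * y + 1 = v \<and> 2 * x + r * v + 1 = q + k" ..
qed

lemma eq1_solvable_iff_parity:
  fixes p q m r k v :: nat
  assumes p2: "p \<ge> 2" and mr: "m < r" and qpm: "q + m = r * p" and pkv: "p * k = 1 + m * v"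
    and k: "0 < k" "k \<le> m"
  shows "eq1_solvable p q \<longleftrightarrow> odd v \<and> even (q + k + 1 + r * v)"
proof -
  have "r * p \<ge> r * 2"
    using p2 by simp
  then have q1: "q \<ge> 1"
    using qpm mr by linarith
  have int_assms: "int q + int m = int r * int p" "int p * int k = 1 + int m * int v"
    using arg_cong[OF qpm, of int] arg_cong[OF pkv, of int] by simp_all
  have p1: "p \<ge> 1"
    using p2 by simp
  show ?thesis
    unfolding eq1_solvable_int_iff[OF p1 q1]
  proof (intro iffI; elim conjE exE)
    fix x y :: int
    assume "x \<ge> 0" "y \<ge> 0" "2 * (int p * x + int q * y) = (int p - 1) * (int q - 1)"
    then have sol: "2 * y + 1 = int v \<and> 2 * x + int r * int v + 1 = int q + int k"
      using eq1_int_solution_iff[OF _ _ int_assms] p2 mr k by simp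
    then have "int v = 2 * y + 1"
      by simp
    then have "odd (int v)"
      by simp
    have "int (q + k + 1 + r * v) = 2 * (x + int r * int v + 1)"
      using sol by simp
    then have "even (int (q + k + 1 + r * v))"
      by (metis dvd_triv_left)
    with \<open>odd (int v)\<close> show "odd v \<and> even (q + k + 1 + r * v)"
      unfolding even_of_nat_iff by blast
  next
    assume "odd v" "even (q + k + 1 + r * v)"
    obtain y where y: "v = 2 * y + 1"
      using \<open>odd v\<close> oddE by blast
    obtain w where w: "q + k + 1 + r * v = 2 * w"
      using \<open>even (q + k + 1 + r * v)\<close> by blast
    have "(q + m) * k = r * (p * k)"
      using qpm by simp
    then have "m * (r * v) + r = q * k + m * k"
      unfolding pkv by (simp add: algebra_simps)
    moreover have "q * k \<le> m * q"
      using k by simp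
    ultimately have "m * (r * v + 1) < m * (q + k)"
      using mr unfolding distrib_left by linarith
    then have "r * v + 1 < q + k"
      using mult_less_cancel1 by blast
    define x where "x = w - (r * v + 1)"
    have "q + k = 2 * x + r * v + 1"
      using w \<open>r * v + 1 < q + k\<close> unfolding x_def by linarith
    then have "int q + int k = 2 * int x + int r * int v + 1"
      using arg_cong[of _ _ int] by fastforce
    moreover have "int v = 2 * int y + 1"
      using y by simp
    ultimately have "2 * (int p * int x + int q * int y) = (int p - 1) * (int q - 1)"
      using eq1_int_solution_iff[OF _ _ int_assms] p2 mr k by simp
    then show "\<exists>x y :: int. x \<ge> 0 \<and> y \<ge> 0 \<and> 2 * (int p * x + int q * y) = (int p - 1) * (int q - 1)"
      by (intro exI[of _ "int x"] exI[of _ "int y"]) simp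
  qed
qed

lemma inverse_mod_in_range:
  fixes e m :: nat
  assumes "coprime e m" and "e > 0" and "m > 0"
  obtains k j where "k * e = 1 + m * j" and "0 < k" and "k \<le> m"
proof -
  obtain x where x: "[e * x = 1] (mod m)"
    using cong_solve_coprime_nat[OF assms(1)] by auto
  define k where "k = (if x mod m = 0 then m else x mod m)"
  have "[k = x] (mod m)"
    unfolding k_def cong_def by simp
  then have "[k * e = 1] (mod m)"
    using x by (metis cong_scalar_right cong_trans mult.commute)
  moreover have "0 < k" and "k \<le> m"
    using assms(3) by (auto simp: k_def)
  moreover have "1 \<le> k * e"
    using \<open>0 < k\<close> assms(2) by simp
  ultimately obtain j where "k * e = j * m + 1"
    using cong_le_nat by blast
  then have "k * e = 1 + m * j"
    by (simp add: mult.commute)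
  with that \<open>0 < k\<close> \<open>k \<le> m\<close> show ?thesis
    by blast
qed

lemma sum_power_Suc_nat: "(\<Sum>l<Suc i. (r::nat) ^ l) = r * (\<Sum>l<i. r ^ l) + 1"
  unfolding sum.lessThan_Suc_shift by (simp add: sum_distrib_left)

lemma power_eq_geometric_sum_nat: "Suc t ^ i = 1 + t * (\<Sum>l<i. Suc t ^ l)"
  by (induction i) (simp_all add: algebra_simps)

text \<open>\<open>P i\<close> models \<open>a\<^sub>i\<^sub>+\<^sub>1 / d\<close> (so \<open>P 0 = e\<close>) and \<open>V i\<close> models \<open>(k P i - 1) / m\<close>,
where \<open>k\<close> is the common inverse of all \<open>P i\<close> modulo \<open>m\<close>.\<close>

locale reduced_seq =
  fixes d m r k :: nat and P V :: "nat \<Rightarrow> nat"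
  assumes d_pos: "d > 0" and r_eq: "r = 1 + d * m"
    and k_pos: "0 < k" and k_le: "k \<le> m"
    and P_Suc: "P (Suc i) + m = r * P i"
    and V_Suc: "V (Suc i) + k = r * V i + d"
    and P_V: "P i * k = 1 + m * V i"
begin

definition parity_cond :: "nat \<Rightarrow> bool" where
  "parity_cond i \<longleftrightarrow> odd (V i) \<and> even (P (Suc i) + k + 1 + r * V i)"

lemma P_pos: "0 < P i"
  using P_V[of i] by (cases "P i") auto

lemma coprime_P_m: "coprime (P i) m"
proof (rule coprimeI)
  fix g assume "g dvd P i" "g dvd m"
  then have "g dvd P i * k - m * V i"
    by simp
  then show "is_unit g"
    using P_V by simp
qed

lemma coprime_P_Suc: "coprime (P i) (P (Suc i))"
proof (rule coprimeI)
  fix g assume gP: "g dvd P i" and gP': "g dvd P (Suc i)"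
  then have "g dvd P (Suc i) + m"
    using P_Suc by (metis dvd_mult)
  then have "g dvd m"
    using gP' by (simp add: dvd_add_right_iff)
  then show "is_unit g"
    using gP coprime_P_m coprime_common_divisor by blast
qed

lemma Gamma_P:
  "Gamma (d * P i) (d * P (Suc i)) = (if eq1_solvable (P i) (P (Suc i)) then 1 else 2)"
  using Gamma_mult_coprime[OF coprime_P_Suc d_pos] .

lemma eq1_solvable_P_iff:
  assumes "P i \<ge> 2"
  shows "eq1_solvable (P i) (P (Suc i)) \<longleftrightarrow> parity_cond i"
proof -
  have "m \<le> d * m"
    using d_pos by simp
  then have "m < r"
    using r_eq by linarith
  then show ?thesis
    unfolding parity_cond_def
    using eq1_solvable_iff_parity[OF assms _ P_Suc P_V k_pos k_le] by simp
qed

lemma even_P_Suc_iff: "even (P (Suc i)) \<longleftrightarrow> even (r * P i + m)"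
  using P_Suc[of i] by (metis even_add)

lemma even_V_Suc_iff: "even (V (Suc i)) \<longleftrightarrow> even (r * V i + d + k)"
  using V_Suc[of i] by (metis even_add add.assoc add.commute)

lemma even_P_k_iff_odd_m_V: "even (P i * k) \<longleftrightarrow> odd (m * V i)"
  using P_V[of i] by simp

lemma parity_cond_odd_d:
  assumes "odd d"
  shows "parity_cond i \<longleftrightarrow> (if even m then odd (V 0) else even k)"
proof (cases "even m")
  case True
  then have "odd r" "odd k" "\<And>i. odd (P i)"
    using assms r_eq even_P_k_iff_odd_m_V by auto
  have "odd (V i) \<longleftrightarrow> odd (V 0)"
    by (induction i) (use \<open>odd r\<close> \<open>odd k\<close> assms even_V_Suc_iff in auto)
  then show ?thesis
    unfolding parity_cond_def using True \<open>odd r\<close> \<open>odd k\<close> \<open>\<And>i. odd (P i)\<close> by auto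
next
  case False
  then have "even r"
    using assms r_eq by simp
  then have "odd (P (Suc i))"
    using False even_P_Suc_iff by simp
  moreover have "even k \<Longrightarrow> odd (V i)"
    using even_P_k_iff_odd_m_V[of i] by auto
  ultimately show ?thesis
    unfolding parity_cond_def using False \<open>even r\<close> by auto
qed

lemma parity_cond_alternates:
  assumes "even d"
  shows "parity_cond (Suc i) \<longleftrightarrow> \<not> parity_cond i"
proof -
  have "odd r"
    using assms r_eq by simp
  then show ?thesis
    unfolding parity_cond_def
    using assms even_P_Suc_iff[of i] even_P_Suc_iff[of "Suc i"] even_V_Suc_iff[of i]
      even_P_k_iff_odd_m_V[of i]
    by (cases "even m"; cases "even k"; cases "even (P i)"; cases "even (V i)") auto
qed

lemma not_parity_cond_if_P_0_eq_1:
  assumes "odd d" and "P 0 = 1"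
  shows "\<not> parity_cond i"
proof -
  have "k = 1 + m * V 0"
    using P_V[of 0] assms(2) by simp
  then have "k = 1" and "V 0 = 0"
    using k_le by (cases "V 0"; simp)+
  then show ?thesis
    using parity_cond_odd_d[OF assms(1)] by simp
qed

end

lemma seq_a_reduced:
  fixes a r d :: nat
  assumes "a > 0" and "r \<ge> 2" and d_def: "d = gcd (a + 1) (r - 1)"
  obtains m k P V where "reduced_seq d m r k P V"
    and "\<And>i. seq_a a r (Suc i) = d * P i"
    and "P 0 = 1 \<longleftrightarrow> (a + 1) dvd (r - 1)"
    and "\<And>i. P 0 \<le> P i" and "\<And>i. 0 < i \<Longrightarrow> 2 \<le> P i"
proof -
  define e where "e = (a + 1) div d"
  define m where "m = (r - 1) div d"
  have "d > 0"
    using d_def by simp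
  have ae: "a + 1 = d * e" and rm: "r = 1 + d * m"
    using assms(2) unfolding e_def m_def d_def by simp_all
  have "e > 0" "m > 0"
    using ae rm assms(2) by (auto intro!: Nat.gr0I)
  have "coprime e m"
    unfolding e_def m_def d_def using \<open>d > 0\<close> d_def by (simp add: div_gcd_coprime)
  obtain k j where ke: "k * e = 1 + m * j" and k: "0 < k" "k \<le> m"
    using inverse_mod_in_range[OF \<open>coprime e m\<close> \<open>e > 0\<close> \<open>m > 0\<close>] by blast
  define S where "S i = (\<Sum>l<i. r ^ l)" for i
  define P where "P i = e + a * m * S i" for i
  define V where "V i = j + k * a * S i" for i
  have aem: "(a + 1) * m = d * e * m"
    using ae by simp
  have akd: "(a + 1) * k = d * (1 + m * j)"
    unfolding ke[symmetric] ae by simp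
  have S_Suc: "S (Suc i) = r * S i + 1" for i
    unfolding S_def by (rule sum_power_Suc_nat)
  show thesis
  proof (rule that)
    show "reduced_seq d m r k P V"
    proof
      fix i
      show "P (Suc i) + m = r * P i"
        unfolding P_def S_Suc rm using aem by (simp add: algebra_simps)
      show "V (Suc i) + k = r * V i + d"
        unfolding V_def S_Suc rm using akd by (simp add: algebra_simps)
      show "P i * k = 1 + m * V i"
        unfolding P_def V_def using ke by (simp add: algebra_simps)
    qed (use \<open>d > 0\<close> rm k in auto)
    show "seq_a a r (Suc i) = d * P i" for i
    proof -
      have "r ^ i = 1 + d * m * S i"
        using power_eq_geometric_sum_nat[of "d * m" i] rm unfolding S_def by simp
      then show ?thesis
        unfolding seq_a_def P_def using ae by (simp add: algebra_simps)
    qed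
    have "P 0 = 1 \<longleftrightarrow> d = a + 1"
      unfolding P_def S_def using ae \<open>d > 0\<close> by auto
    also have "\<dots> \<longleftrightarrow> (a + 1) dvd (r - 1)"
      unfolding d_def using gcd_proj1_iff[of "a + 1" "r - 1"] by auto
    finally show "P 0 = 1 \<longleftrightarrow> (a + 1) dvd (r - 1)" .
    show "P 0 \<le> P i" for i
      unfolding P_def S_def by simp
    show "2 \<le> P i" if "0 < i" for i
    proof -
      have "S i \<ge> 1"
        using that S_Suc by (cases i) auto
      then have "a * m * S i \<ge> 1"
        using assms(1) \<open>m > 0\<close> by simp
      then show ?thesis
        unfolding P_def using \<open>e > 0\<close> by linarith
    qed
  qed
qed

theorem theorem1p7:
  fixes a r :: nat
  assumes "a > 0" and "r \<ge> 2"
  defines "d \<equiv> gcd (a + 1) (r - 1)"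
  shows "(odd d \<longrightarrow>
            (\<not> (a + 1) dvd (r - 1) \<longrightarrow>
               (\<exists>c. \<forall>n\<ge>1. Gamma (seq_a a r n) (seq_a a r (n + 1)) = c)) \<and>
            ((a + 1) dvd (r - 1) \<longrightarrow>
               Gamma (seq_a a r 1) (seq_a a r 2) = 1 \<and>
               (\<forall>n\<ge>2. Gamma (seq_a a r n) (seq_a a r (n + 1)) = 2)))
       \<and> (even d \<longrightarrow>
            (\<forall>n\<ge>2. {Gamma (seq_a a r n) (seq_a a r (n + 1)),
                      Gamma (seq_a a r (n + 1)) (seq_a a r (n + 2))} = {1, 2}))"
proof -
  obtain m k P V where "reduced_seq d m r k P V"
    and seq: "\<And>i. seq_a a r (Suc i) = d * P i"
    and P_0: "P 0 = 1 \<longleftrightarrow> (a + 1) dvd (r - 1)"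
    and P_ge_P_0: "\<And>i. P 0 \<le> P i" and P_ge_2: "\<And>i. 0 < i \<Longrightarrow> 2 \<le> P i"
    using seq_a_reduced[OF assms(1,2) d_def[THEN meta_eq_to_obj_eq]] by blast
  interpret reduced_seq d m r k P V by fact
  have Gamma_seq:
    "Gamma (seq_a a r (Suc i)) (seq_a a r (Suc (Suc i))) = (if parity_cond i then 1 else 2)"
    if "2 \<le> P i" for i
    using Gamma_P[of i] eq1_solvable_P_iff[OF that] by (simp add: seq)
  show ?thesis
  proof (intro conjI impI allI)
    assume "odd d" and "\<not> (a + 1) dvd (r - 1)"
    then have "2 \<le> P i" for i
      using P_0 P_pos[of 0] P_ge_P_0[of i] by linarith
    then have "Gamma (seq_a a r n) (seq_a a r (n + 1)) = (if parity_cond 0 then 1 else 2)"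
      if "n \<ge> 1" for n
      using that Gamma_seq parity_cond_odd_d[OF \<open>odd d\<close>] by (cases n) auto
    then show "\<exists>c. \<forall>n\<ge>1. Gamma (seq_a a r n) (seq_a a r (n + 1)) = c"
      by blast
  next
    assume "(a + 1) dvd (r - 1)"
    then show "Gamma (seq_a a r 1) (seq_a a r 2) = 1"
      using Gamma_P[of 0] seq[of 0] seq[of 1] P_0 eq1_solvable_one by (simp add: numeral_2_eq_2)
  next
    fix n :: nat
    assume "odd d" and "(a + 1) dvd (r - 1)" and "n \<ge> 2"
    then obtain i where "n = Suc i" and "0 < i"
      by (cases n) auto
    then show "Gamma (seq_a a r n) (seq_a a r (n + 1)) = 2"
      using Gamma_seq P_ge_2 not_parity_cond_if_P_0_eq_1 \<open>odd d\<close> \<open>(a + 1) dvd (r - 1)\<close> P_0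
      by simp
  next
    fix n :: nat
    assume "even d" and "n \<ge> 2"
    then obtain i where "n = Suc i" and "0 < i"
      by (cases n) auto
    then show "{Gamma (seq_a a r n) (seq_a a r (n + 1)),
                Gamma (seq_a a r (n + 1)) (seq_a a r (n + 2))} = {1, 2}"
      using Gamma_seq P_ge_2 parity_cond_alternates[OF \<open>even d\<close>, of i] by auto
  qed
qed

end
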